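(* Let $N\ge1$, $\chi_1,\dots,\chi_N\in\mathbb{C}$, and let $\Psi(x_1,\dots,x_N;t_1,\dots,t_N)$ be a holomorphic function on an open domain satisfying $$\sum_{i=1}^N(-2x_i\partial_{x_i}+2\chi_i)\Psi=0,\qquad \sum_{i=1}^N\partial_{x_i}\Psi=0,\qquad \sum_{i=1}^N(-x_i^2\partial_{x_i}+2\chi_ix_i)\Psi=0.$$ Define, on an open simply connected domain of $(x_1,\dots,x_{N+1};t_1,\dots,t_{N+1})$ where $x_i\neq x_{N+1}$, $t_i\neq t_{N+1}$ and $\xi_i=-\frac{t_i-t_{N+1}}{x_i-x_{N+1}}$ stays in the domain of $\Psi$ (with fixed branches of the powers), $$\Upsilon=\prod_{i=1}^N\left(\frac{(x_i-x_{N+1})^2}{t_i-t_{N+1}}\right)^{\chi_i}\Psi(\xi_1,\dots,\xi_N;t_1,\dots,t_N).$$ Then, with $\chi_{N+1}=k/2$ for an arbitrary $k\in\mathbb{C}$, $$\sum_{i=1}^{N+1}\partial_{x_i}\Upsilon=0,\qquad\sum_{i=1}^{N+1}t_i\partial_{x_i}\Upsilon=0,\qquad\sum_{i=1}^{N+1}(-2x_i\partial_{x_i}+2\chi_i)\Upsilon-k\Upsilon=0.$$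
   Context: These are the invariance (Ward) identities for $\mathrm{PGL}_2(\mathbb{C})$ conformal blocks on $\mathbb{P}^1$ with parabolic structures: $x_i$ are coordinates on the big cell of the flag variety at the $i$-th marked point $t_i$, and $e,h,f\in\mathfrak{sl}_2$ act at point $i$ by $\partial_{x_i}$, $-2x_i\partial_{x_i}+2\chi_i$, $-x_i^2\partial_{x_i}+2\chi_ix_i$. The functions are treated as holomorphic functions of all variables; $\partial_{x_i}$ in the identities for $\Upsilon$ denotes partial derivative in the variables $(x_1,\dots,x_{N+1},t_1,\dots,t_{N+1})$. *)

theory Defs
  imports "HOL-Analysis.Analysis"
begin

text \<open>For the domain of Psi we use the index type ('n + 'n): coordinate Inl i is x_i,
  coordinate Inr i is t_i (i ranges over 'n, a finite type with N elements).
  For the domain of Upsilon we use ('n option + 'n option): Some i is the index i,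
  None is the extra index N+1.\<close>

definition cscale :: "complex \<Rightarrow> complex ^ 'i \<Rightarrow> complex ^ 'i" where
  "cscale c v = (\<chi> j. c * v $ j)"

definition cholomorphic_on :: "(complex ^ 'i \<Rightarrow> complex) \<Rightarrow> (complex ^ 'i) set \<Rightarrow> bool" where
  "cholomorphic_on f U \<longleftrightarrow> open U \<and>
     (\<forall>z\<in>U. \<exists>L. (f has_derivative L) (at z) \<and> (\<forall>c v. L (cscale c v) = c * L v))"

definition vupd :: "complex ^ 'i \<Rightarrow> 'i \<Rightarrow> complex \<Rightarrow> complex ^ 'i" where
  "vupd z j w = (\<chi> k. if k = j then w else z $ k)"

definition partial :: "(complex ^ 'i \<Rightarrow> complex) \<Rightarrow> 'i \<Rightarrow> complex ^ 'i \<Rightarrow> complex" where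
  "partial f j z = deriv (\<lambda>w. f (vupd z j w)) (z $ j)"

definition xi_map :: "complex ^ ('n::finite option + 'n option) \<Rightarrow> complex ^ ('n + 'n)" where
  "xi_map z = (\<chi> a. case a of
       Inl i \<Rightarrow> - (z $ Inr (Some i) - z $ Inr None) / (z $ Inl (Some i) - z $ Inl None)
     | Inr i \<Rightarrow> z $ Inr (Some i))"

definition pow_base :: "'n::finite \<Rightarrow> complex ^ ('n option + 'n option) \<Rightarrow> complex" where
  "pow_base i z = ((z $ Inl (Some i) - z $ Inl None) ^ 2) / (z $ Inr (Some i) - z $ Inr None)"

text \<open>Upsilon, with the branch of the power w^chi_i fixed as exp(chi_i * Lg_i) where
  Lg_i is a holomorphic branch of log of pow_base i.\<close>
definition Upsilon :: "('n::finite \<Rightarrow> complex) \<Rightarrow> ('n \<Rightarrow> complex ^ ('n option + 'n option) \<Rightarrow> complex)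
    \<Rightarrow> (complex ^ ('n + 'n) \<Rightarrow> complex) \<Rightarrow> complex ^ ('n option + 'n option) \<Rightarrow> complex" where
  "Upsilon chi Lg \<Psi> z = (\<Prod>i\<in>UNIV. exp (chi i * Lg i z)) * \<Psi> (xi_map z)"

end

theory Submission
  imports Defs
begin

text \<open>
  Upsilon is a power prefactor P times Psi(xi), and both factors depend on the x-coordinates
  only through the differences x_i - x_(N+1). Hence the x_(N+1)-derivative of Upsilon is minus
  the sum of the x_m-derivatives, m <= N, which is the first identity and reduces the other two
  to sums over m <= N weighted by t_m - t_(N+1) and x_m - x_(N+1) respectively. The chain rule
  gives d Upsilon / d x_m = 2 chi_m / (x_m - x_(N+1)) Upsilon
  + P (t_m - t_(N+1)) / (x_m - x_(N+1))^2 d Psi / d xi_m, and written in terms of xi_m these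
  weighted sums become -P times the f- and the h-Ward identity of Psi at xi.
\<close>

lemma bounded_linear_axis: "bounded_linear (axis k :: complex \<Rightarrow> complex ^ 'i::finite)"
proof (rule bounded_linear_intro[where K = 1])
  fix x y :: complex and r :: real
  show "axis k (x + y) = (axis k x + axis k y :: complex ^ 'i)"
    by (simp add: vec_eq_iff axis_def)
  show "axis k (r *\<^sub>R x) = (r *\<^sub>R axis k x :: complex ^ 'i)"
    by (simp add: vec_eq_iff axis_def)
  have "norm (axis k x :: complex ^ 'i) \<le> (\<Sum>i\<in>UNIV. norm ((axis k x :: complex ^ 'i) $ i))"
    unfolding norm_vec_def by (rule L2_set_le_sum) simp
  also have "\<dots> = (\<Sum>i\<in>UNIV. if i = k then norm x else 0)"
    by (rule sum.cong) (auto simp: axis_def)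
  finally show "norm (axis k x :: complex ^ 'i) \<le> norm x * 1" by simp
qed

lemma has_derivative_vec_componentwise:
  fixes \<gamma> :: "complex \<Rightarrow> complex ^ 'i::finite"
  assumes "\<And>k. ((\<lambda>w. \<gamma> w $ k) has_field_derivative u $ k) (at w0)"
  shows "(\<gamma> has_derivative (\<lambda>h. cscale h u)) (at w0)"
proof -
  have \<gamma>_sum: "\<gamma> = (\<lambda>w. \<Sum>k\<in>UNIV. axis k (\<gamma> w $ k))"
    by (rule ext) (simp add: vec_eq_iff axis_def)
  have "((\<lambda>w. \<Sum>k\<in>UNIV. axis k (\<gamma> w $ k)) has_derivative (\<lambda>h. \<Sum>k\<in>UNIV. axis k (u $ k * h))) (at w0)"
    using bounded_linear.has_derivative[OF bounded_linear_axis assms[unfolded has_field_derivative_def]]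
    by (intro has_derivative_sum) blast
  moreover have "(\<lambda>h. \<Sum>k\<in>UNIV. axis k (u $ k * h)) = (\<lambda>h. cscale h u)"
    by (rule ext) (simp add: vec_eq_iff axis_def cscale_def mult.commute)
  ultimately show ?thesis using \<gamma>_sum by simp
qed

lemma vupd_same [simp]: "vupd z j (z $ j) = z"
  by (simp add: vupd_def vec_eq_iff)

lemma has_derivative_vupd: "(vupd z j has_derivative (\<lambda>h. cscale h (axis j 1))) (at w0)"
  by (rule has_derivative_vec_componentwise) (simp add: vupd_def axis_def)

lemma complex_linear_eq_sum_axis:
  assumes "bounded_linear L" and "\<forall>c v. L (cscale c v) = c * L v"
  shows "L v = (\<Sum>a\<in>UNIV. v $ a * L (axis a 1))"
proof -
  have "(\<Sum>a\<in>UNIV. v $ a * axis a 1 $ i) = v $ i" for i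
  proof -
    have "(\<Sum>a\<in>UNIV. v $ a * axis a 1 $ i) = (\<Sum>a\<in>UNIV. if a = i then v $ i else 0)"
      by (rule sum.cong) (auto simp: axis_def)
    then show ?thesis by simp
  qed
  then have "v = (\<Sum>a\<in>UNIV. cscale (v $ a) (axis a 1))"
    by (simp add: vec_eq_iff cscale_def)
  then have "L v = L (\<Sum>a\<in>UNIV. cscale (v $ a) (axis a 1))" by (rule arg_cong)
  also have "\<dots> = (\<Sum>a\<in>UNIV. L (cscale (v $ a) (axis a 1)))"
    using linear_sum[OF bounded_linear.linear[OF assms(1)]] by (simp add: o_def)
  finally show ?thesis using assms(2) by simp
qed

lemma has_field_derivative_compose_complex_linear:
  assumes "(f has_derivative L) (at (\<gamma> w0))" and "(\<gamma> has_derivative (\<lambda>h. cscale h u)) (at w0)"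
    and "\<forall>c v. L (cscale c v) = c * L v"
  shows "((\<lambda>w. f (\<gamma> w)) has_field_derivative L u) (at w0)"
proof -
  have "((\<lambda>w. f (\<gamma> w)) has_derivative (\<lambda>h. L (cscale h u))) (at w0)"
    using has_derivative_compose[OF assms(2,1)] by (simp add: o_def)
  moreover have "(\<lambda>h. L (cscale h u)) = (*) (L u)"
    using assms(3) by (auto simp: mult.commute)
  ultimately show ?thesis by (simp add: has_field_derivative_def)
qed

lemma partial_eq_derivative_axis:
  assumes "(f has_derivative L) (at z)" and "\<forall>c v. L (cscale c v) = c * L v"
  shows "partial f a z = L (axis a 1)"
proof -
  have "((\<lambda>w. f (vupd z a w)) has_field_derivative L (axis a 1)) (at (z $ a))"
    using assms by (intro has_field_derivative_compose_complex_linear has_derivative_vupd) simp_all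
  then show ?thesis unfolding partial_def by (rule DERIV_imp_deriv)
qed

lemma cholomorphic_on_chain_rule:
  assumes "cholomorphic_on f D" and "\<gamma> w0 \<in> D"
    and "(\<gamma> has_derivative (\<lambda>h. cscale h u)) (at w0)"
  shows "((\<lambda>w. f (\<gamma> w)) has_field_derivative (\<Sum>a\<in>UNIV. u $ a * partial f a (\<gamma> w0))) (at w0)"
proof -
  obtain L where L: "(f has_derivative L) (at (\<gamma> w0))" and lin: "\<forall>c v. L (cscale c v) = c * L v"
    using assms(1,2) unfolding cholomorphic_on_def by blast
  have "L u = (\<Sum>a\<in>UNIV. u $ a * partial f a (\<gamma> w0))"
    using complex_linear_eq_sum_axis[OF has_derivative_bounded_linear[OF L] lin, of u]
      partial_eq_derivative_axis[OF L lin] by simp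
  with has_field_derivative_compose_complex_linear[OF L assms(3) lin] show ?thesis by simp
qed

lemma sum_axis_mult [simp]: "(\<Sum>a\<in>UNIV. (axis j c :: complex ^ 'i::finite) $ a * h a) = c * h j"
proof -
  have "(\<Sum>a\<in>UNIV. (axis j c :: complex ^ 'i) $ a * h a) = (\<Sum>a\<in>UNIV. if a = j then c * h j else 0)"
    by (rule sum.cong) (auto simp: axis_def)
  then show ?thesis by simp
qed

lemma has_field_derivative_partial_vupd:
  assumes "cholomorphic_on f U" and "z \<in> U"
  shows "((\<lambda>w. f (vupd z j w)) has_field_derivative partial f j z) (at (z $ j))"
  using cholomorphic_on_chain_rule[OF assms(1) _ has_derivative_vupd, of z j "z $ j"] assms(2)
  by simp

lemma has_field_derivative_log_branch_vupd:
  assumes g: "cholomorphic_on g U" and z: "z \<in> U" and branch: "\<forall>y\<in>U. exp (g y) = p y"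
    and p': "((\<lambda>w. p (vupd z j w)) has_field_derivative P') (at (z $ j))" and "p z \<noteq> 0"
  shows "((\<lambda>w. g (vupd z j w)) has_field_derivative P' / p z) (at (z $ j))"
proof -
  note G = has_field_derivative_partial_vupd[OF g z, of j]
  have "((\<lambda>w. exp (g (vupd z j w))) has_field_derivative exp (g z) * partial g j z) (at (z $ j))"
    using DERIV_fun_exp[OF G] by (simp add: mult.commute)
  moreover have "open (vupd z j -` U)"
    using g has_derivative_continuous[OF has_derivative_vupd]
    by (intro continuous_open_vimage) (auto simp: cholomorphic_on_def)
  moreover have "z $ j \<in> vupd z j -` U" using z by simp
  moreover have "exp (g (vupd z j w)) = p (vupd z j w)" if "w \<in> vupd z j -` U" for w
    using branch that by simp
  ultimately have "((\<lambda>w. p (vupd z j w)) has_field_derivative exp (g z) * partial g j z) (at (z $ j))"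
    by (rule has_field_derivative_transform_within_open)
  then have "((\<lambda>w. p (vupd z j w)) has_field_derivative p z * partial g j z) (at (z $ j))"
    using branch z by simp
  then have "P' = p z * partial g j z" using DERIV_unique p' by blast
  then have "partial g j z = P' / p z" using \<open>p z \<noteq> 0\<close> by (simp add: field_simps)
  with G show ?thesis by simp
qed

lemma sum_UNIV_option:
  fixes f :: "'n::finite option \<Rightarrow> 'a::comm_monoid_add"
  shows "(\<Sum>j\<in>UNIV. f j) = f None + (\<Sum>i\<in>UNIV. f (Some i))"
proof -
  have "sum f UNIV = f None + sum f (range Some)"
    by (subst UNIV_option_conv) simp
  then show ?thesis by (simp add: sum.reindex)
qed

lemma sum_UNIV_Plus:
  fixes f :: "'a::finite + 'b::finite \<Rightarrow> 'c::comm_monoid_add"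
  shows "(\<Sum>j\<in>UNIV. f j) = (\<Sum>i\<in>UNIV. f (Inl i)) + (\<Sum>i\<in>UNIV. f (Inr i))"
  using sum.Plus[of "UNIV :: 'a set" "UNIV :: 'b set" f] by (simp add: o_def)

lemma sum_weighted_option_translation:
  fixes g c :: "'n::finite option \<Rightarrow> 'a::comm_ring"
  assumes "g None = - (\<Sum>m\<in>UNIV. g (Some m))"
  shows "(\<Sum>j\<in>UNIV. c j * g j) = (\<Sum>m\<in>UNIV. (c (Some m) - c None) * g (Some m))"
  using assms by (simp add: sum_UNIV_option sum_distrib_left left_diff_distrib sum_subtractf)

definition xdiff :: "complex ^ ('n::finite option + 'n option) \<Rightarrow> 'n \<Rightarrow> complex" where
  "xdiff z i = z $ Inl (Some i) - z $ Inl None"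

definition tdiff :: "complex ^ ('n::finite option + 'n option) \<Rightarrow> 'n \<Rightarrow> complex" where
  "tdiff z i = z $ Inr (Some i) - z $ Inr None"

definition prefactor :: "('n::finite \<Rightarrow> complex) \<Rightarrow> ('n \<Rightarrow> complex ^ ('n option + 'n option) \<Rightarrow> complex)
    \<Rightarrow> complex ^ ('n option + 'n option) \<Rightarrow> complex" where
  "prefactor chi Lg z = (\<Prod>i\<in>UNIV. exp (chi i * Lg i z))"

lemma Upsilon_eq_prefactor: "Upsilon chi Lg \<Psi> z = prefactor chi Lg z * \<Psi> (xi_map z)"
  by (simp add: Upsilon_def prefactor_def)

lemma pow_base_eq: "pow_base i z = xdiff z i ^ 2 / tdiff z i"
  by (simp add: pow_base_def xdiff_def tdiff_def)

lemma xi_map_Inl: "xi_map z $ Inl i = - tdiff z i / xdiff z i"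
  by (simp add: xi_map_def xdiff_def tdiff_def)

lemma has_derivative_xi_map_vupd_Some:
  assumes "xdiff z m \<noteq> 0"
  shows "((\<lambda>w. xi_map (vupd z (Inl (Some m)) w)) has_derivative
      (\<lambda>h. cscale h (axis (Inl m) (tdiff z m / xdiff z m ^ 2)))) (at (z $ Inl (Some m)))"
proof (rule has_derivative_vec_componentwise)
  have "((\<lambda>w. - tdiff z m / (w - z $ Inl None)) has_field_derivative tdiff z m / xdiff z m ^ 2)
      (at (z $ Inl (Some m)))"
    using assms by (auto intro!: derivative_eq_intros simp: xdiff_def power2_eq_square)
  then show "((\<lambda>w. xi_map (vupd z (Inl (Some m)) w) $ b) has_field_derivative
      axis (Inl m) (tdiff z m / xdiff z m ^ 2) $ b) (at (z $ Inl (Some m)))" for b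
    by (cases b) (auto simp: xi_map_def vupd_def axis_def tdiff_def)
qed

lemma has_derivative_xi_map_vupd_None:
  assumes "\<forall>i. xdiff z i \<noteq> 0"
  shows "((\<lambda>w. xi_map (vupd z (Inl None) w)) has_derivative
      (\<lambda>h. cscale h (\<chi> b. case b of Inl i \<Rightarrow> - tdiff z i / xdiff z i ^ 2 | Inr i \<Rightarrow> 0)))
      (at (z $ Inl None))"
proof (rule has_derivative_vec_componentwise)
  have "((\<lambda>w. - tdiff z i / (z $ Inl (Some i) - w)) has_field_derivative - tdiff z i / xdiff z i ^ 2)
      (at (z $ Inl None))" for i
    using assms by (auto intro!: derivative_eq_intros simp: xdiff_def power2_eq_square)
  then show "((\<lambda>w. xi_map (vupd z (Inl None) w) $ b) has_field_derivative
      (\<chi> b. case b of Inl i \<Rightarrow> - tdiff z i / xdiff z i ^ 2 | Inr i \<Rightarrow> 0) $ b) (at (z $ Inl None))" for b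
    by (cases b) (auto simp: xi_map_def vupd_def tdiff_def)
qed

lemma has_field_derivative_pow_base_vupd_Some:
  assumes "tdiff z i \<noteq> 0"
  shows "((\<lambda>w. pow_base i (vupd z (Inl (Some m)) w)) has_field_derivative
      (if i = m then 2 * xdiff z m / tdiff z m else 0)) (at (z $ Inl (Some m)))"
proof (cases "i = m")
  case True
  have "((\<lambda>w. (w - z $ Inl None) ^ 2 / tdiff z m) has_field_derivative 2 * xdiff z m / tdiff z m)
      (at (z $ Inl (Some m)))"
    using assms True by (auto intro!: derivative_eq_intros simp: xdiff_def)
  with True show ?thesis by (simp add: pow_base_def vupd_def tdiff_def)
qed (simp add: pow_base_def vupd_def)

lemma has_field_derivative_pow_base_vupd_None:
  assumes "tdiff z i \<noteq> 0"
  shows "((\<lambda>w. pow_base i (vupd z (Inl None) w)) has_field_derivative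
      - 2 * xdiff z i / tdiff z i) (at (z $ Inl None))"
proof -
  have "((\<lambda>w. (z $ Inl (Some i) - w) ^ 2 / tdiff z i) has_field_derivative - 2 * xdiff z i / tdiff z i)
      (at (z $ Inl None))"
    using assms by (auto intro!: derivative_eq_intros simp: xdiff_def)
  then show ?thesis by (simp add: pow_base_def vupd_def tdiff_def)
qed

locale Upsilon_setting =
  fixes chi :: "'n::finite \<Rightarrow> complex"
    and \<Psi> :: "complex ^ ('n + 'n) \<Rightarrow> complex"
    and D :: "(complex ^ ('n + 'n)) set"
    and U :: "(complex ^ ('n option + 'n option)) set"
    and Lg :: "'n \<Rightarrow> complex ^ ('n option + 'n option) \<Rightarrow> complex"
  assumes holo: "cholomorphic_on \<Psi> D"
    and U_x: "\<forall>z\<in>U. \<forall>i. z $ Inl (Some i) \<noteq> z $ Inl None"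
    and U_t: "\<forall>z\<in>U. \<forall>i. z $ Inr (Some i) \<noteq> z $ Inr None"
    and U_D: "\<forall>z\<in>U. xi_map z \<in> D"
    and Lg_holo: "\<forall>i. cholomorphic_on (Lg i) U"
    and Lg_branch: "\<forall>i. \<forall>z\<in>U. exp (Lg i z) = pow_base i z"
begin

lemma xdiff_nonzero: "z \<in> U \<Longrightarrow> xdiff z i \<noteq> 0"
  using U_x by (simp add: xdiff_def)

lemma tdiff_nonzero: "z \<in> U \<Longrightarrow> tdiff z i \<noteq> 0"
  using U_t by (simp add: tdiff_def)

lemma partial_Upsilon:
  assumes z: "z \<in> U"
    and \<xi>': "((\<lambda>w. xi_map (vupd z j w)) has_derivative (\<lambda>h. cscale h u)) (at (z $ j))"
    and p': "\<And>i. ((\<lambda>w. pow_base i (vupd z j w)) has_field_derivative P' i) (at (z $ j))"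
  shows "partial (Upsilon chi Lg \<Psi>) j z =
      (\<Sum>i\<in>UNIV. chi i * (P' i / pow_base i z)) * Upsilon chi Lg \<Psi> z
      + prefactor chi Lg z * (\<Sum>a\<in>UNIV. u $ a * partial \<Psi> a (xi_map z))"
proof -
  define S where "S w = (\<Sum>i\<in>UNIV. chi i * Lg i (vupd z j w))" for w
  define S' where "S' = (\<Sum>i\<in>UNIV. chi i * (P' i / pow_base i z))"
  have "pow_base i z \<noteq> 0" for i
    using xdiff_nonzero[OF z] tdiff_nonzero[OF z] by (simp add: pow_base_eq)
  then have "((\<lambda>w. Lg i (vupd z j w)) has_field_derivative P' i / pow_base i z) (at (z $ j))" for i
    using Lg_holo Lg_branch z p' by (intro has_field_derivative_log_branch_vupd) auto
  then have S: "(S has_field_derivative S') (at (z $ j))"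
    unfolding S_def S'_def by (intro DERIV_sum DERIV_cmult)
  have \<Psi>: "((\<lambda>w. \<Psi> (xi_map (vupd z j w))) has_field_derivative
      (\<Sum>a\<in>UNIV. u $ a * partial \<Psi> a (xi_map z))) (at (z $ j))"
    using cholomorphic_on_chain_rule[OF holo _ \<xi>'] U_D z by simp
  have "(\<lambda>w. Upsilon chi Lg \<Psi> (vupd z j w)) = (\<lambda>w. exp (S w) * \<Psi> (xi_map (vupd z j w)))"
    by (simp add: Upsilon_def S_def exp_sum)
  moreover have "exp (S (z $ j)) = prefactor chi Lg z"
    by (simp add: S_def prefactor_def exp_sum)
  ultimately have "((\<lambda>w. Upsilon chi Lg \<Psi> (vupd z j w)) has_field_derivative
      S' * Upsilon chi Lg \<Psi> z + prefactor chi Lg z * (\<Sum>a\<in>UNIV. u $ a * partial \<Psi> a (xi_map z)))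
      (at (z $ j))"
    using DERIV_mult[OF DERIV_fun_exp[OF S] \<Psi>] by (simp add: Upsilon_eq_prefactor algebra_simps)
  then show ?thesis
    unfolding S'_def partial_def by (rule DERIV_imp_deriv)
qed

lemma partial_Upsilon_Some:
  assumes z: "z \<in> U"
  shows "partial (Upsilon chi Lg \<Psi>) (Inl (Some m)) z =
      2 * chi m / xdiff z m * Upsilon chi Lg \<Psi> z
      + prefactor chi Lg z * (tdiff z m / xdiff z m ^ 2) * partial \<Psi> (Inl m) (xi_map z)"
proof -
  note nz = xdiff_nonzero[OF z] tdiff_nonzero[OF z]
  have "(\<Sum>i\<in>UNIV. chi i * ((if i = m then 2 * xdiff z m / tdiff z m else 0) / pow_base i z))
      = (\<Sum>i\<in>UNIV. if i = m then 2 * chi m / xdiff z m else 0)"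
    by (rule sum.cong) (auto simp: pow_base_eq nz power2_eq_square field_simps)
  then show ?thesis
    using partial_Upsilon[OF z has_derivative_xi_map_vupd_Some has_field_derivative_pow_base_vupd_Some]
      nz by (simp add: mult.assoc)
qed

lemma partial_Upsilon_None:
  assumes z: "z \<in> U"
  shows "partial (Upsilon chi Lg \<Psi>) (Inl None) z = - (\<Sum>m\<in>UNIV. partial (Upsilon chi Lg \<Psi>) (Inl (Some m)) z)"
proof -
  note nz = xdiff_nonzero[OF z] tdiff_nonzero[OF z]
  have "(\<Sum>i\<in>UNIV. chi i * (- 2 * xdiff z i / tdiff z i / pow_base i z))
      = - (\<Sum>i\<in>UNIV. 2 * chi i / xdiff z i)"
    by (subst sum_negf[symmetric], rule sum.cong) (auto simp: pow_base_eq nz power2_eq_square field_simps)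
  moreover have "(\<Sum>a\<in>UNIV. (\<chi> b. case b of Inl i \<Rightarrow> - tdiff z i / xdiff z i ^ 2 | Inr i \<Rightarrow> 0) $ a
        * partial \<Psi> a (xi_map z))
      = - (\<Sum>i\<in>UNIV. tdiff z i / xdiff z i ^ 2 * partial \<Psi> (Inl i) (xi_map z))"
    unfolding sum_UNIV_Plus by (simp add: sum_negf)
  ultimately show ?thesis
    using partial_Upsilon[OF z has_derivative_xi_map_vupd_None has_field_derivative_pow_base_vupd_None]
      nz by (simp add: partial_Upsilon_Some[OF z] sum.distrib sum_distrib_left sum_distrib_right
        algebra_simps)
qed

lemma tdiff_mult_partial_Upsilon:
  assumes z: "z \<in> U"
  shows "tdiff z m * partial (Upsilon chi Lg \<Psi>) (Inl (Some m)) z =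
      - prefactor chi Lg z * (- ((xi_map z $ Inl m) ^ 2) * partial \<Psi> (Inl m) (xi_map z)
                              + 2 * chi m * xi_map z $ Inl m * \<Psi> (xi_map z))"
  using xdiff_nonzero[OF z]
  by (simp add: partial_Upsilon_Some[OF z] Upsilon_eq_prefactor xi_map_Inl power2_eq_square field_simps)

lemma xdiff_mult_partial_Upsilon:
  assumes z: "z \<in> U"
  shows "- 2 * xdiff z m * partial (Upsilon chi Lg \<Psi>) (Inl (Some m)) z + 2 * chi m * Upsilon chi Lg \<Psi> z =
      - prefactor chi Lg z * (- 2 * xi_map z $ Inl m * partial \<Psi> (Inl m) (xi_map z)
                              + 2 * chi m * \<Psi> (xi_map z))"
  using xdiff_nonzero[OF z]
  by (simp add: partial_Upsilon_Some[OF z] Upsilon_eq_prefactor xi_map_Inl power2_eq_square field_simps)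

lemma Upsilon_ward_e:
  assumes "z \<in> U"
  shows "(\<Sum>j\<in>UNIV. partial (Upsilon chi Lg \<Psi>) (Inl j) z) = 0"
  using partial_Upsilon_None[OF assms] by (simp add: sum_UNIV_option)

lemma Upsilon_ward_f:
  assumes z: "z \<in> U"
    and ward: "(\<Sum>i\<in>UNIV. - ((xi_map z $ Inl i) ^ 2) * partial \<Psi> (Inl i) (xi_map z)
                            + 2 * chi i * xi_map z $ Inl i * \<Psi> (xi_map z)) = 0"
  shows "(\<Sum>j\<in>UNIV. z $ Inr j * partial (Upsilon chi Lg \<Psi>) (Inl j) z) = 0"
proof -
  have "(\<Sum>j\<in>UNIV. z $ Inr j * partial (Upsilon chi Lg \<Psi>) (Inl j) z)
      = (\<Sum>m\<in>UNIV. tdiff z m * partial (Upsilon chi Lg \<Psi>) (Inl (Some m)) z)"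
    using sum_weighted_option_translation[of "\<lambda>j. partial (Upsilon chi Lg \<Psi>) (Inl j) z"
        "\<lambda>j. z $ Inr j", OF partial_Upsilon_None[OF z]]
    by (simp add: tdiff_def)
  also have "\<dots> = - prefactor chi Lg z * (\<Sum>i\<in>UNIV. - ((xi_map z $ Inl i) ^ 2) * partial \<Psi> (Inl i) (xi_map z)
                            + 2 * chi i * xi_map z $ Inl i * \<Psi> (xi_map z))"
    by (simp add: tdiff_mult_partial_Upsilon[OF z] sum_distrib_left)
  finally show ?thesis using ward by simp
qed

lemma Upsilon_ward_h:
  assumes z: "z \<in> U"
    and ward: "(\<Sum>i\<in>UNIV. - 2 * xi_map z $ Inl i * partial \<Psi> (Inl i) (xi_map z)
                            + 2 * chi i * \<Psi> (xi_map z)) = 0"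
  shows "(\<Sum>j\<in>UNIV. - 2 * z $ Inl j * partial (Upsilon chi Lg \<Psi>) (Inl j) z
          + 2 * (case j of Some i \<Rightarrow> chi i | None \<Rightarrow> k / 2) * Upsilon chi Lg \<Psi> z)
        - k * Upsilon chi Lg \<Psi> z = 0"
proof -
  let ?Y = "Upsilon chi Lg \<Psi> z"
  have x_part: "(\<Sum>j\<in>UNIV. - 2 * z $ Inl j * partial (Upsilon chi Lg \<Psi>) (Inl j) z)
      = (\<Sum>m\<in>UNIV. - 2 * xdiff z m * partial (Upsilon chi Lg \<Psi>) (Inl (Some m)) z)"
    using sum_weighted_option_translation[of "\<lambda>j. partial (Upsilon chi Lg \<Psi>) (Inl j) z"
        "\<lambda>j. - 2 * z $ Inl j", OF partial_Upsilon_None[OF z]]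
    by (simp add: xdiff_def algebra_simps)
  have chi_part: "(\<Sum>j\<in>UNIV. 2 * (case j of Some i \<Rightarrow> chi i | None \<Rightarrow> k / 2) * ?Y)
      = k * ?Y + (\<Sum>m\<in>UNIV. 2 * chi m * ?Y)"
    by (simp add: sum_UNIV_option)
  have "(\<Sum>j\<in>UNIV. - 2 * z $ Inl j * partial (Upsilon chi Lg \<Psi>) (Inl j) z
          + 2 * (case j of Some i \<Rightarrow> chi i | None \<Rightarrow> k / 2) * ?Y) - k * ?Y
      = (\<Sum>m\<in>UNIV. - 2 * xdiff z m * partial (Upsilon chi Lg \<Psi>) (Inl (Some m)) z + 2 * chi m * ?Y)"
    unfolding sum.distrib x_part chi_part by simp
  also have "\<dots> = - prefactor chi Lg z * (\<Sum>i\<in>UNIV. - 2 * xi_map z $ Inl i * partial \<Psi> (Inl i) (xi_map z)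
                            + 2 * chi i * \<Psi> (xi_map z))"
    by (simp only: xdiff_mult_partial_Upsilon[OF z] sum_distrib_left)
  finally show ?thesis using ward by simp
qed

end

theorem mainTheorem8:
  fixes chi :: "'n::finite \<Rightarrow> complex"
    and \<Psi> :: "complex ^ ('n + 'n) \<Rightarrow> complex"
    and D :: "(complex ^ ('n + 'n)) set"
    and U :: "(complex ^ ('n option + 'n option)) set"
    and Lg :: "'n \<Rightarrow> complex ^ ('n option + 'n option) \<Rightarrow> complex"
    and k :: complex
  assumes holo: "cholomorphic_on \<Psi> D"
    and ward_h: "\<forall>z\<in>D. (\<Sum>i\<in>UNIV. - 2 * z $ Inl i * partial \<Psi> (Inl i) z + 2 * chi i * \<Psi> z) = 0"
    and ward_e: "\<forall>z\<in>D. (\<Sum>i\<in>UNIV. partial \<Psi> (Inl i) z) = 0"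
    and ward_f: "\<forall>z\<in>D. (\<Sum>i\<in>UNIV. - ((z $ Inl i) ^ 2) * partial \<Psi> (Inl i) z
                                   + 2 * chi i * z $ Inl i * \<Psi> z) = 0"
    and U_open: "open U" and U_sc: "simply_connected U"
    and U_x: "\<forall>z\<in>U. \<forall>i. z $ Inl (Some i) \<noteq> z $ Inl None"
    and U_t: "\<forall>z\<in>U. \<forall>i. z $ Inr (Some i) \<noteq> z $ Inr None"
    and U_D: "\<forall>z\<in>U. xi_map z \<in> D"
    and Lg_holo: "\<forall>i. cholomorphic_on (Lg i) U"
    and Lg_branch: "\<forall>i. \<forall>z\<in>U. exp (Lg i z) = pow_base i z"
  shows "\<forall>z\<in>U.
      (\<Sum>j\<in>UNIV. partial (Upsilon chi Lg \<Psi>) (Inl j) z) = 0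
    \<and> (\<Sum>j\<in>UNIV. z $ Inr j * partial (Upsilon chi Lg \<Psi>) (Inl j) z) = 0
    \<and> (\<Sum>j\<in>UNIV. - 2 * z $ Inl j * partial (Upsilon chi Lg \<Psi>) (Inl j) z
          + 2 * (case j of Some i \<Rightarrow> chi i | None \<Rightarrow> k / 2) * Upsilon chi Lg \<Psi> z)
        - k * Upsilon chi Lg \<Psi> z = 0"
proof -
  interpret Upsilon_setting chi \<Psi> D U Lg
    using holo U_x U_t U_D Lg_holo Lg_branch by unfold_locales
  show ?thesis
  proof (intro ballI conjI)
    fix z assume z: "z \<in> U"
    then have \<xi>: "xi_map z \<in> D" using U_D by blast
    show "(\<Sum>j\<in>UNIV. partial (Upsilon chi Lg \<Psi>) (Inl j) z) = 0"
      using Upsilon_ward_e[OF z] .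
    show "(\<Sum>j\<in>UNIV. z $ Inr j * partial (Upsilon chi Lg \<Psi>) (Inl j) z) = 0"
      using Upsilon_ward_f[OF z] ward_f \<xi> by blast
    show "(\<Sum>j\<in>UNIV. - 2 * z $ Inl j * partial (Upsilon chi Lg \<Psi>) (Inl j) z
          + 2 * (case j of Some i \<Rightarrow> chi i | None \<Rightarrow> k / 2) * Upsilon chi Lg \<Psi> z)
        - k * Upsilon chi Lg \<Psi> z = 0"
      using Upsilon_ward_h[OF z] ward_h \<xi> by blast
  qed
qed

end
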